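(* Let $a(n,k)$ be the number of non-squashing partitions of $n$ into exactly $k$ parts and $b(n,k)$ the number of non-squashing partitions of $n$ into exactly $k$ distinct parts (with $a(n,k)=0$ for $n<0$). Then $b(n,0)=a(n,0)$ and $b(n,1)=a(n,1)$ for all $n\ge0$, and $b(n,k)=a(n-2^{k-2},k)$ for all $n\ge0$, $k\ge2$. Moreover, for $k\ge2$, $$\sum_{n\ge0}b(n,k)x^n=\frac{x^{3\cdot2^{k-2}}}{\prod_{j=0}^{k-1}\left(1-x^{2^j}\right)},$$ so that for $k\ge2$, $b(n,k)$ equals the number of partitions of $n-3\cdot2^{k-2}$ into powers of $2$ not exceeding $2^{k-1}$.
   Context: A partition $n=p_1+\cdots+p_k$ with $1\le p_1\le\cdots\le p_k$ is non-squashing if $p_1+\cdots+p_j\le p_{j+1}$ for all $1\le j\le k-1$. The empty partition is the unique partition of $0$ and has $0$ parts. *)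

theory Defs
  imports Main "HOL-Computational_Algebra.Formal_Power_Series"
begin

definition is_partition :: "nat \<Rightarrow> nat list \<Rightarrow> bool" where
  "is_partition n ps \<longleftrightarrow> sorted ps \<and> (\<forall>p\<in>set ps. 1 \<le> p) \<and> sum_list ps = n"

text \<open>Non-squashing: p_1 + ... + p_j \<le> p_(j+1) for all 1 \<le> j \<le> k-1
  (0-based: sum of the first j parts \<le> ps ! j for 1 \<le> j < length ps).\<close>
definition non_squashing :: "nat list \<Rightarrow> bool" where
  "non_squashing ps \<longleftrightarrow> (\<forall>j. 1 \<le> j \<and> j < length ps \<longrightarrow> sum_list (take j ps) \<le> ps ! j)"

definition nsq_a :: "int \<Rightarrow> nat \<Rightarrow> nat" where
  "nsq_a n k = (if n < 0 then 0 else
     card {ps. is_partition (nat n) ps \<and> non_squashing ps \<and> length ps = k})"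

definition nsq_b :: "int \<Rightarrow> nat \<Rightarrow> nat" where
  "nsq_b n k = (if n < 0 then 0 else
     card {ps. is_partition (nat n) ps \<and> non_squashing ps \<and> length ps = k \<and> distinct ps})"

definition pow2_parts :: "int \<Rightarrow> nat \<Rightarrow> nat" where
  "pow2_parts m k = (if m < 0 then 0 else
     card {ps. is_partition (nat m) ps \<and> (\<forall>p\<in>set ps. \<exists>j<k. p = 2 ^ j)})"

end

theory Submission
  imports Defs
begin

text \<open>Deleting the largest part of a non-squashing partition of n into k + 1 \<ge> 2 parts leaves
  a non-squashing partition of some S \<le> n div 2 into k parts, and conversely every such partition
  extends by the part n - S. Hence a(n, k + 1) = \<Sum>S \<le> n div 2. a(S, k), and the same recursion
  holds for b once k \<ge> 2: then every part is smaller than S \<le> n - S, so the new part is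
  automatically distinct. Let P(k, m) = pow2_parts m k count the partitions of m into powers of 2
  below 2^k (zero for m < 0). Halving the parts other than 1 shows that the shifted counts
  P(k, m - c) satisfy the same kind of recursion, \<Sum>S \<le> n div 2. P(k, S - c) = P(k + 1, n - 2c);
  it also follows from P(k + 1, m) = P(k, m) + P(k + 1, m - 2^k) by induction on k and downward
  induction on c. Starting from a(n, 1) = P(1, n - 1) and b(n, 2) = (n - 1) div 2 = P(2, n - 3),
  induction on k gives a(n, k) = P(k, n - 2^(k-1)) and b(n, k) = P(k, n - 3 * 2^(k-2)), and the
  generating function of P(k, -) is the product of the 1/(1 - x^(2^j)) for j < k.\<close>

definition nsq_partitions :: "nat \<Rightarrow> nat \<Rightarrow> nat list set" where
  "nsq_partitions n k = {ps. is_partition n ps \<and> non_squashing ps \<and> length ps = k}"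

lemma nsq_a_eq_card: "nsq_a (int n) k = card (nsq_partitions n k)"
  by (simp add: nsq_a_def nsq_partitions_def)

lemma nsq_b_eq_card: "nsq_b (int n) k = card {ps \<in> nsq_partitions n k. distinct ps}"
  by (simp add: nsq_b_def nsq_partitions_def)

lemma length_le_sum_list: "\<forall>p\<in>set ps. 1 \<le> (p::nat) \<Longrightarrow> length ps \<le> sum_list ps"
  by (induction ps) auto

lemma member_less_sum_list:
  assumes "\<forall>p\<in>set ps. 1 \<le> (p::nat)" "2 \<le> length ps" "x \<in> set ps"
  shows "x < sum_list ps"
proof -
  have "sum_list ps = x + sum_list (remove1 x ps)"
    using sum_list_map_remove1[OF assms(3), of id] by simp
  moreover have "1 \<le> length (remove1 x ps)"
    using assms(2,3) by (simp add: length_remove1)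
  moreover have "\<forall>p\<in>set (remove1 x ps). 1 \<le> p"
    using assms(1) by (meson notin_set_remove1)
  ultimately show ?thesis
    using length_le_sum_list[of "remove1 x ps"] by linarith
qed

lemma sorted_member_le_last: "sorted xs \<Longrightarrow> x \<in> set xs \<Longrightarrow> x \<le> last xs"
  by (induction xs) (auto simp: sorted_append intro: order_trans)

lemma finite_partitions: "finite {ps. is_partition n ps \<and> P ps}"
proof (rule finite_subset)
  show "{ps. is_partition n ps \<and> P ps} \<subseteq> {xs. set xs \<subseteq> {..n} \<and> length xs \<le> n}"
    using length_le_sum_list member_le_sum_list unfolding is_partition_def by fastforce
  show "finite {xs. set xs \<subseteq> {..n} \<and> length xs \<le> n}"
    by (rule finite_lists_length_le) simp
qed

lemma finite_nsq_partitions: "finite (nsq_partitions n k)"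
  unfolding nsq_partitions_def by (rule finite_partitions)

lemma non_squashing_singleton: "non_squashing [x]"
  unfolding non_squashing_def by auto

lemma non_squashing_snoc:
  assumes "ps \<noteq> []"
  shows "non_squashing (ps @ [p]) \<longleftrightarrow> non_squashing ps \<and> sum_list ps \<le> p"
proof -
  have "non_squashing (ps @ [p]) \<longleftrightarrow>
      (\<forall>j. 1 \<le> j \<and> (j < length ps \<or> j = length ps) \<longrightarrow>
        sum_list (take j (ps @ [p])) \<le> (ps @ [p]) ! j)"
    unfolding non_squashing_def by (auto simp: less_Suc_eq)
  also have "\<dots> \<longleftrightarrow> non_squashing ps \<and> sum_list ps \<le> p"
    using assms unfolding non_squashing_def by (auto simp: nth_append Suc_le_eq)
  finally show ?thesis .
qed

lemma snoc_in_nsq_partitions: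
  assumes "ps \<noteq> []"
  shows "ps @ [p] \<in> nsq_partitions n (Suc k) \<longleftrightarrow>
    ps \<in> nsq_partitions (sum_list ps) k \<and> sum_list ps \<le> p \<and> n = sum_list ps + p"
proof -
  have "1 \<le> sum_list ps" if "\<forall>q\<in>set ps. 1 \<le> q"
    using length_le_sum_list[OF that] assms by (cases ps) auto
  then show ?thesis
    using member_le_sum_list[of _ ps]
    by (fastforce simp: nsq_partitions_def is_partition_def non_squashing_snoc[OF assms]
        sorted_append)
qed

section \<open>Non-squashing partitions by their largest part\<close>

lemma nsq_partitions_Suc:
  assumes "1 \<le> k"
  shows "nsq_partitions n (Suc k) = (\<Union>S\<le>n div 2. (\<lambda>ps. ps @ [n - S]) ` nsq_partitions S k)"
proof (intro equalityI subsetI)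
  fix xs assume xs: "xs \<in> nsq_partitions n (Suc k)"
  define ps where "ps = butlast xs"
  have "xs \<noteq> []" "length ps = k" using xs by (auto simp: nsq_partitions_def ps_def)
  then have "xs = ps @ [last xs]" "ps \<noteq> []"
    using assms by (auto simp: ps_def simp del: length_butlast)
  then have "ps \<in> nsq_partitions (sum_list ps) k" "sum_list ps \<le> n div 2"
    "xs = ps @ [n - sum_list ps]"
    using xs snoc_in_nsq_partitions[of ps "last xs" n k] by auto
  then show "xs \<in> (\<Union>S\<le>n div 2. (\<lambda>ps. ps @ [n - S]) ` nsq_partitions S k)"
    by blast
next
  fix xs assume "xs \<in> (\<Union>S\<le>n div 2. (\<lambda>ps. ps @ [n - S]) ` nsq_partitions S k)"
  then obtain S ps where "S \<le> n div 2" "ps \<in> nsq_partitions S k" "xs = ps @ [n - S]"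
    by blast
  moreover from this have "ps \<noteq> []" "sum_list ps = S"
    using assms by (auto simp: nsq_partitions_def is_partition_def)
  ultimately show "xs \<in> nsq_partitions n (Suc k)"
    by (auto simp: snoc_in_nsq_partitions)
qed

lemma distinct_nsq_partitions_Suc:
  assumes "2 \<le> k"
  shows "{xs \<in> nsq_partitions n (Suc k). distinct xs} =
    (\<Union>S\<le>n div 2. (\<lambda>ps. ps @ [n - S]) ` {ps \<in> nsq_partitions S k. distinct ps})"
proof -
  have "n - S \<notin> set ps" if "ps \<in> nsq_partitions S k" "S \<le> n div 2" for ps S
  proof -
    have "x < S" if "x \<in> set ps" for x
      using member_less_sum_list[of ps x] \<open>ps \<in> nsq_partitions S k\<close> \<open>x \<in> set ps\<close> assms
      by (auto simp: nsq_partitions_def is_partition_def)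
    with \<open>S \<le> n div 2\<close> show ?thesis by fastforce
  qed
  then show ?thesis
    using assms by (auto simp: nsq_partitions_Suc)
qed

lemma card_UN_snoc:
  fixes A :: "nat \<Rightarrow> nat list set"
  assumes "\<And>S. S \<le> N \<Longrightarrow> finite (A S)" "N \<le> n"
  shows "card (\<Union>S\<le>N. (\<lambda>ps. ps @ [n - S]) ` A S) = (\<Sum>S\<le>N. card (A S))"
proof -
  have "card (\<Union>S\<le>N. (\<lambda>ps. ps @ [n - S]) ` A S) = (\<Sum>S\<le>N. card ((\<lambda>ps. ps @ [n - S]) ` A S))"
    using assms by (intro card_UN_disjoint) auto
  also have "\<dots> = (\<Sum>S\<le>N. card (A S))"
    by (intro sum.cong refl card_image) (simp add: inj_on_def)
  finally show ?thesis .
qed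

lemma card_nsq_partitions_Suc:
  assumes "1 \<le> k"
  shows "card (nsq_partitions n (Suc k)) = (\<Sum>S\<le>n div 2. card (nsq_partitions S k))"
  unfolding nsq_partitions_Suc[OF assms] by (rule card_UN_snoc) (auto simp: finite_nsq_partitions)

lemma card_distinct_nsq_partitions_Suc:
  assumes "2 \<le> k"
  shows "card {xs \<in> nsq_partitions n (Suc k). distinct xs} =
    (\<Sum>S\<le>n div 2. card {ps \<in> nsq_partitions S k. distinct ps})"
  unfolding distinct_nsq_partitions_Suc[OF assms]
  by (rule card_UN_snoc) (auto simp: finite_nsq_partitions)

lemma nsq_partitions_1: "nsq_partitions n (Suc 0) = (if 1 \<le> n then {[n]} else {})"
  by (auto simp: nsq_partitions_def is_partition_def non_squashing_singleton length_Suc_conv)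

lemma distinct_nsq_partitions_2:
  "{ps \<in> nsq_partitions n 2. distinct ps} = (\<lambda>x. [x, n - x]) ` {1..(n - 1) div 2}"
proof -
  have "non_squashing [x, y] \<longleftrightarrow> x \<le> y" for x y :: nat
    using non_squashing_snoc[of "[x]" y] non_squashing_singleton by simp
  then show ?thesis
    by (auto simp: nsq_partitions_def is_partition_def length_Suc_conv numeral_2_eq_2 image_iff;
        presburger)
qed

lemma card_distinct_nsq_partitions_2: "card {ps \<in> nsq_partitions n 2. distinct ps} = (n - 1) div 2"
  unfolding distinct_nsq_partitions_2 by (subst card_image) (auto simp: inj_on_def)

section \<open>Partitions into powers of 2\<close>

definition binary_partitions :: "nat \<Rightarrow> nat \<Rightarrow> nat list set" where
  "binary_partitions k m = {ps. is_partition m ps \<and> (\<forall>p\<in>set ps. \<exists>j<k. p = 2 ^ j)}"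

lemma pow2_parts_eq_card: "pow2_parts (int m) k = card (binary_partitions k m)"
  by (simp add: pow2_parts_def binary_partitions_def)

lemma finite_binary_partitions: "finite (binary_partitions k m)"
  unfolding binary_partitions_def by (rule finite_partitions)

lemma binary_partitions_Suc:
  "binary_partitions (Suc k) m = binary_partitions k m \<union>
    (if 2 ^ k \<le> m then (\<lambda>ps. ps @ [2 ^ k]) ` binary_partitions (Suc k) (m - 2 ^ k) else {})"
proof (intro equalityI subsetI)
  fix xs assume xs: "xs \<in> binary_partitions (Suc k) m"
  show "xs \<in> binary_partitions k m \<union>
    (if 2 ^ k \<le> m then (\<lambda>ps. ps @ [2 ^ k]) ` binary_partitions (Suc k) (m - 2 ^ k) else {})"
  proof (cases "2 ^ k \<in> set xs")
    case False
    with xs show ?thesis by (auto simp: binary_partitions_def less_Suc_eq)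
  next
    case True
    then have "xs \<noteq> []" by auto
    have "\<exists>j\<le>k. last xs = 2 ^ j"
      using xs last_in_set[OF \<open>xs \<noteq> []\<close>] by (auto simp: binary_partitions_def less_Suc_eq_le)
    then have "last xs \<le> 2 ^ k"
      using power_increasing[of _ k "2::nat"] by auto
    moreover have "2 ^ k \<le> last xs"
      using xs True sorted_member_le_last by (auto simp: binary_partitions_def is_partition_def)
    ultimately obtain ps where xs_eq: "xs = ps @ [2 ^ k]"
      using append_butlast_last_id[OF \<open>xs \<noteq> []\<close>] by (metis le_antisym)
    with xs have "ps \<in> binary_partitions (Suc k) (m - 2 ^ k)" "2 ^ k \<le> m"
      by (auto simp: binary_partitions_def is_partition_def sorted_append)
    with xs_eq show ?thesis by auto
  qed
next
  fix xs
  assume "xs \<in> binary_partitions k m \<union>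
    (if 2 ^ k \<le> m then (\<lambda>ps. ps @ [2 ^ k]) ` binary_partitions (Suc k) (m - 2 ^ k) else {})"
  then consider "xs \<in> binary_partitions k m"
    | ps where "2 ^ k \<le> m" "ps \<in> binary_partitions (Suc k) (m - 2 ^ k)" "xs = ps @ [2 ^ k]"
    by (auto split: if_splits)
  then show "xs \<in> binary_partitions (Suc k) m"
  proof cases
    case 1
    then show ?thesis by (auto simp: binary_partitions_def less_Suc_eq)
  next
    case 2
    have "\<forall>p\<in>set ps. p \<le> (2::nat) ^ k"
      using 2 by (auto simp: binary_partitions_def less_Suc_eq_le power_increasing)
    with 2 show ?thesis
      by (auto simp: binary_partitions_def is_partition_def sorted_append)
  qed
qed

lemma pow2_parts_neg: "m < 0 \<Longrightarrow> pow2_parts m k = 0"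
  by (simp add: pow2_parts_def)

lemma pow2_parts_0: "pow2_parts m 0 = (if m = 0 then 1 else 0)"
proof (cases "m < 0")
  case True
  then show ?thesis by (simp add: pow2_parts_neg)
next
  case False
  then obtain m' where "m = int m'" by (metis nonneg_int_cases not_less)
  moreover have "binary_partitions 0 m' = (if m' = 0 then {[]} else {})"
    by (auto simp: binary_partitions_def is_partition_def)
  ultimately show ?thesis by (simp add: pow2_parts_eq_card)
qed

lemma pow2_parts_Suc: "pow2_parts m (Suc k) = pow2_parts m k + pow2_parts (m - 2 ^ k) (Suc k)"
proof (cases "m < 2 ^ k")
  case True
  have "pow2_parts m (Suc k) = pow2_parts m k"
  proof (cases "m < 0")
    case False
    then obtain m' where m: "m = int m'" by (metis nonneg_int_cases not_less)
    with True have "\<not> 2 ^ k \<le> m'" by simp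
    then show ?thesis by (simp add: m pow2_parts_eq_card binary_partitions_Suc[of k m'])
  qed (simp add: pow2_parts_neg)
  with True show ?thesis by (simp add: pow2_parts_neg)
next
  case False
  moreover have "(0::int) \<le> 2 ^ k" by simp
  ultimately have "0 \<le> m" by linarith
  then obtain m' where m: "m = int m'" by (metis nonneg_int_cases)
  with False have "2 ^ k \<le> m'" by simp
  let ?B = "binary_partitions (Suc k) (m' - 2 ^ k)"
  have "pow2_parts (m - 2 ^ k) (Suc k) = card ?B"
    using pow2_parts_eq_card[of "m' - 2 ^ k" "Suc k"] \<open>2 ^ k \<le> m'\<close> by (simp add: m)
  moreover have "binary_partitions k m' \<inter> (\<lambda>ps. ps @ [2 ^ k]) ` ?B = {}"
    by (auto simp: binary_partitions_def)
  moreover have "card ((\<lambda>ps. ps @ [2 ^ k]) ` ?B) = card ?B"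
    by (rule card_image) (simp add: inj_on_def)
  ultimately show ?thesis
    using \<open>2 ^ k \<le> m'\<close>
    by (simp add: m pow2_parts_eq_card binary_partitions_Suc[of k m'] card_Un_disjoint
        finite_binary_partitions)
qed

lemma pow2_parts_1: "pow2_parts m (Suc 0) = (if 0 \<le> m then 1 else 0)"
proof (cases "m < 0")
  case True
  then show ?thesis by (simp add: pow2_parts_neg)
next
  case False
  then obtain m' where "m = int m'" by (metis nonneg_int_cases not_less)
  have step: "pow2_parts i (Suc 0) = pow2_parts i 0 + pow2_parts (i - 1) (Suc 0)" for i
    using pow2_parts_Suc[of i 0] by simp
  have "pow2_parts (int m') (Suc 0) = 1"
    by (induction m') (subst step; simp add: pow2_parts_0 pow2_parts_neg)+
  then show ?thesis using \<open>m = int m'\<close> by simp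
qed

lemma sum_pow2_parts_half:
  "(\<Sum>S\<le>n div 2. pow2_parts (int S - int c) k) = pow2_parts (int n - 2 * int c) (Suc k)"
proof (induction k arbitrary: c)
  case 0
  have "(\<Sum>S\<le>n div 2. pow2_parts (int S - int c) 0) = (\<Sum>S\<le>n div 2. if S = c then 1 else 0)"
    by (intro sum.cong) (auto simp: pow2_parts_0)
  also have "\<dots> = (if c \<le> n div 2 then 1 else 0)"
    by simp
  also have "c \<le> n div 2 \<longleftrightarrow> 0 \<le> int n - 2 * int c"
    by linarith
  finally show ?case by (simp only: pow2_parts_1)
next
  case (Suc k)
  show ?case
  proof (induction c rule: measure_induct_rule[where f = "\<lambda>c. Suc n - 2 * c"])
    case (less c)
    show ?case
    proof (cases "n < 2 * c")
      case True
      then show ?thesis by (simp add: pow2_parts_neg)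
    next
      case False
      then have "Suc n - 2 * (c + 2 ^ k) < Suc n - 2 * c"
        by (intro diff_less_mono2) simp_all
      then have IH: "(\<Sum>S\<le>n div 2. pow2_parts (int S - int (c + 2 ^ k)) (Suc k)) =
          pow2_parts (int n - 2 * int c - 2 ^ Suc k) (Suc (Suc k))"
        using less.IH[of "c + 2 ^ k"] by (simp add: algebra_simps)
      have "(\<Sum>S\<le>n div 2. pow2_parts (int S - int c) (Suc k)) =
          (\<Sum>S\<le>n div 2. pow2_parts (int S - int c) k +
            pow2_parts (int S - int (c + 2 ^ k)) (Suc k))"
        by (intro sum.cong refl) (subst pow2_parts_Suc; simp add: algebra_simps)
      also have "\<dots> = pow2_parts (int n - 2 * int c) (Suc k) +
          pow2_parts (int n - 2 * int c - 2 ^ Suc k) (Suc (Suc k))"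
        by (simp only: sum.distrib Suc.IH IH)
      also have "\<dots> = pow2_parts (int n - 2 * int c) (Suc (Suc k))"
        by (rule pow2_parts_Suc[symmetric])
      finally show ?thesis .
    qed
  qed
qed

lemma pow2_parts_2: "pow2_parts (int m) 2 = m div 2 + 1"
  using sum_pow2_parts_half[where n = m and c = 0 and k = 1]
  by (simp add: pow2_parts_1 numeral_2_eq_2)

lemma card_nsq_partitions:
  assumes "1 \<le> k"
  shows "card (nsq_partitions n k) = pow2_parts (int n - 2 ^ (k - 1)) k"
  using assms
proof (induction k arbitrary: n rule: nat_induct_at_least)
  case base
  then show ?case by (simp add: nsq_partitions_1 pow2_parts_1)
next
  case (Suc k)
  have "card (nsq_partitions n (Suc k)) = (\<Sum>S\<le>n div 2. card (nsq_partitions S k))"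
    using Suc.hyps by (rule card_nsq_partitions_Suc)
  also have "\<dots> = (\<Sum>S\<le>n div 2. pow2_parts (int S - int (2 ^ (k - 1))) k)"
    by (simp add: Suc.IH)
  also have "\<dots> = pow2_parts (int n - 2 * int (2 ^ (k - 1))) (Suc k)"
    by (rule sum_pow2_parts_half)
  also have "2 * int (2 ^ (k - 1)) = 2 ^ (Suc k - 1)"
    using Suc.hyps by (auto dest!: le_Suc_ex)
  finally show ?case .
qed

lemma card_distinct_nsq_partitions:
  assumes "2 \<le> k"
  shows "card {ps \<in> nsq_partitions n k. distinct ps} = pow2_parts (int n - 3 * 2 ^ (k - 2)) k"
  using assms
proof (induction k arbitrary: n rule: nat_induct_at_least)
  case base
  show ?case
  proof (cases "3 \<le> n")
    case True
    then have "pow2_parts (int n - 3) 2 = (n - 3) div 2 + 1"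
      using pow2_parts_2[of "n - 3"] by simp
    with True show ?thesis by (simp add: card_distinct_nsq_partitions_2)
  qed (simp add: card_distinct_nsq_partitions_2 pow2_parts_neg)
next
  case (Suc k)
  have "card {ps \<in> nsq_partitions n (Suc k). distinct ps} =
      (\<Sum>S\<le>n div 2. card {ps \<in> nsq_partitions S k. distinct ps})"
    using Suc.hyps by (rule card_distinct_nsq_partitions_Suc)
  also have "\<dots> = (\<Sum>S\<le>n div 2. pow2_parts (int S - int (3 * 2 ^ (k - 2))) k)"
    by (simp add: Suc.IH)
  also have "\<dots> = pow2_parts (int n - 2 * int (3 * 2 ^ (k - 2))) (Suc k)"
    by (rule sum_pow2_parts_half)
  also have "2 * int (3 * 2 ^ (k - 2)) = 3 * 2 ^ (Suc k - 2)"
    using Suc.hyps by (auto dest!: le_Suc_ex)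
  finally show ?case .
qed

section \<open>The generating function\<close>

lemma fps_pow2_parts_mult_prod:
  "Abs_fps (\<lambda>n. of_nat (pow2_parts (int n - int c) k)) * (\<Prod>j<k. 1 - fps_X ^ 2 ^ j) =
    (fps_X ^ c :: 'a::comm_ring_1 fps)"
proof (induction k)
  case 0
  show ?case by (rule fps_ext) (simp add: pow2_parts_0)
next
  case (Suc k)
  let ?F = "\<lambda>k. Abs_fps (\<lambda>n. of_nat (pow2_parts (int n - int c) k)) :: 'a fps"
  have step: "?F (Suc k) * (1 - fps_X ^ 2 ^ k) = ?F k"
  proof (rule fps_ext)
    fix n
    have shifted: "pow2_parts (int n - int c - 2 ^ k) (Suc k) =
        (if n < 2 ^ k then 0 else pow2_parts (int (n - 2 ^ k) - int c) (Suc k))"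
    proof (cases "n < 2 ^ k")
      case True
      then have "int n < 2 ^ k" by simp
      then have "int n - int c - 2 ^ k < 0" by linarith
      with True show ?thesis by (simp add: pow2_parts_neg)
    qed (simp add: algebra_simps)
    have "fps_nth (?F (Suc k) * (1 - fps_X ^ 2 ^ k)) n =
        fps_nth (?F (Suc k)) n - fps_nth (?F (Suc k) * fps_X ^ 2 ^ k) n"
      by (simp add: right_diff_distrib)
    also have "\<dots> = of_nat (pow2_parts (int n - int c) (Suc k)) -
        of_nat (pow2_parts (int n - int c - 2 ^ k) (Suc k))"
      unfolding shifted by (simp add: fps_X_power_mult_right_nth)
    also have "\<dots> = fps_nth (?F k) n"
      using pow2_parts_Suc[of "int n - int c" k] by simp
    finally show "fps_nth (?F (Suc k) * (1 - fps_X ^ 2 ^ k)) n = fps_nth (?F k) n" .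
  qed
  have "?F (Suc k) * (\<Prod>j<Suc k. 1 - fps_X ^ 2 ^ j) =
      (?F (Suc k) * (1 - fps_X ^ 2 ^ k)) * (\<Prod>j<k. 1 - fps_X ^ 2 ^ j)"
    by (simp add: ac_simps)
  also have "\<dots> = fps_X ^ c"
    unfolding step by (rule Suc.IH)
  finally show ?case .
qed

lemma fps_pow2_parts:
  "Abs_fps (\<lambda>n. of_nat (pow2_parts (int n - int c) k)) =
    (fps_X ^ c :: 'a::field fps) / (\<Prod>j<k. 1 - fps_X ^ 2 ^ j)"
proof -
  have "fps_nth (1 - fps_X ^ 2 ^ j :: 'a fps) 0 = 1" for j
    by simp
  then have "1 - fps_X ^ 2 ^ j \<noteq> (0 :: 'a fps)" for j
    by (metis fps_zero_nth zero_neq_one)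
  then have "(\<Prod>j<k. 1 - fps_X ^ 2 ^ j :: 'a fps) \<noteq> 0"
    by simp
  then show ?thesis
    using fps_pow2_parts_mult_prod[of c k] by (metis nonzero_mult_div_cancel_right)
qed

lemma nsq_a_eq_pow2_parts:
  assumes "1 \<le> k"
  shows "nsq_a m k = pow2_parts (m - 2 ^ (k - 1)) k"
proof (cases "m < 0")
  case True
  moreover have "(0::int) < 2 ^ (k - 1)" by simp
  ultimately have "m - 2 ^ (k - 1) < 0" by linarith
  with True show ?thesis by (simp add: nsq_a_def pow2_parts_neg)
next
  case False
  then obtain n where "m = int n" by (metis nonneg_int_cases not_less)
  with assms show ?thesis by (simp add: nsq_a_eq_card card_nsq_partitions)
qed

lemma nsq_b_eq_pow2_parts:
  assumes "2 \<le> k"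
  shows "nsq_b (int n) k = pow2_parts (int n - 3 * 2 ^ (k - 2)) k"
  using assms by (simp add: nsq_b_eq_card card_distinct_nsq_partitions)

lemma nsq_b_eq_nsq_a_if_le_1:
  assumes "k \<le> 1"
  shows "nsq_b m k = nsq_a m k"
proof -
  have "length ps \<le> 1 \<Longrightarrow> distinct ps" for ps :: "nat list"
    by (cases ps) auto
  with assms show ?thesis
    unfolding nsq_a_def nsq_b_def by (metis (mono_tags))
qed

theorem theorem4:
  shows "(\<forall>n::nat. nsq_b (int n) 0 = nsq_a (int n) 0 \<and> nsq_b (int n) 1 = nsq_a (int n) 1)
    \<and> (\<forall>n::nat. \<forall>k::nat. k \<ge> 2 \<longrightarrow> nsq_b (int n) k = nsq_a (int n - 2 ^ (k - 2)) k)
    \<and> (\<forall>k::nat. k \<ge> 2 \<longrightarrow>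
         Abs_fps (\<lambda>n. of_nat (nsq_b (int n) k)) =
           (fps_X ^ (3 * 2 ^ (k - 2)) :: rat fps) / (\<Prod>j<k. (1 - fps_X ^ (2 ^ j))))
    \<and> (\<forall>n::nat. \<forall>k::nat. k \<ge> 2 \<longrightarrow> nsq_b (int n) k = pow2_parts (int n - 3 * 2 ^ (k - 2)) k)"
proof (intro conjI allI impI)
  fix n :: nat
  show "nsq_b (int n) 0 = nsq_a (int n) 0" "nsq_b (int n) 1 = nsq_a (int n) 1"
    by (simp_all add: nsq_b_eq_nsq_a_if_le_1)
next
  fix n k :: nat
  assume "2 \<le> k"
  then have "nsq_a (int n - 2 ^ (k - 2)) k = pow2_parts (int n - 2 ^ (k - 2) - 2 ^ (k - 1)) k"
    by (intro nsq_a_eq_pow2_parts) simp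
  also have "int n - 2 ^ (k - 2) - 2 ^ (k - 1) = int n - 3 * 2 ^ (k - 2)"
    using \<open>2 \<le> k\<close> by (auto dest!: le_Suc_ex)
  finally show "nsq_b (int n) k = nsq_a (int n - 2 ^ (k - 2)) k"
    using \<open>2 \<le> k\<close> by (simp add: nsq_b_eq_pow2_parts)
next
  fix k :: nat
  assume "2 \<le> k"
  then show "Abs_fps (\<lambda>n. of_nat (nsq_b (int n) k)) =
      (fps_X ^ (3 * 2 ^ (k - 2)) :: rat fps) / (\<Prod>j<k. (1 - fps_X ^ (2 ^ j)))"
    using fps_pow2_parts[of "3 * 2 ^ (k - 2)" k] by (simp add: nsq_b_eq_pow2_parts)
next
  fix n k :: nat
  assume "2 \<le> k"
  then show "nsq_b (int n) k = pow2_parts (int n - 3 * 2 ^ (k - 2)) k"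
    by (rule nsq_b_eq_pow2_parts)
qed

end
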